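(* Let $k\ge 0$. Let $p_1(x_1,\bar x_3)$ be a probability density on $\mathbb R\times\mathbb R^k$ and $p_2$ a smooth probability density on $\mathbb R$, and consider the translation families $\{p_1(x_1-\tau,\bar x_3)\}_{\tau\in\mathbb R}$ and $\{p_2(x_2-\tau)\}_{\tau\in\mathbb R}$, whose Fisher informations with respect to $\tau$, denoted $J^\tau_{p_1}$ and $J^\tau_{p_2}$, are assumed to exist, be finite and positive. Let $$r(z-\tau,\bar x_3)=\int_{\mathbb R}p_1(s-\tau,\bar x_3)\,p_2(z-s)\,ds.$$ Then the Fisher information $J^\tau_r$ of the family $\{r(z-\tau,\bar x_3)\}_{\tau\in\mathbb R}$ with respect to $\tau$ satisfies $$\frac{1}{J^\tau_r}\;\ge\;\frac{1}{J^\tau_{p_1}}+\frac{1}{J^\tau_{p_2}}.$$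
   Context: A smooth density $\Phi$ on $\mathbb R$: $\Phi(x)>0$ for all $x$, $\Phi'$ exists, and $\int\Phi'(y)^2/\Phi(y)\,dy<\infty$. For a family of densities $\{f(z_1-\tau,z_2,\dots,z_m)\}_{\tau\in\mathbb R}$ on $\mathbb R^m$, its Fisher information with respect to $\tau$ is $\int \frac{1}{f(z_1-\tau,z_2,\dots,z_m)}\left[\frac{d}{d\tau}f(z_1-\tau,z_2,\dots,z_m)\right]^2dz_1\cdots dz_m$ (independent of $\tau$). Note that $\bar x_3$ may be dependent on $x_1$ under $p_1$. *)

theory Defs
  imports "HOL-Analysis.Analysis"
begin

text \<open>The space R^k, k \<ge> 0, as the finite product measure of k copies of Lebesgue measure
  (points are functions nat \<Rightarrow> real, extensional on {..<k}); k = 0 gives a one-point space.\<close>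
definition Rk :: "nat \<Rightarrow> (nat \<Rightarrow> real) measure" where
  "Rk k = PiM {..<k} (\<lambda>_. lborel)"

text \<open>Fisher information with respect to tau of the translation family
  f(z1 - tau, z') on R x M (evaluated at tau = 0; it is independent of tau).\<close>
definition fisher_shift :: "'b measure \<Rightarrow> (real \<times> 'b \<Rightarrow> real) \<Rightarrow> ennreal" where
  "fisher_shift M f =
     (\<integral>\<^sup>+ z. ennreal ((deriv (\<lambda>\<tau>. f (fst z - \<tau>, snd z)) 0)\<^sup>2 / f z) \<partial>(lborel \<Otimes>\<^sub>M M))"

definition fisher_shift1 :: "(real \<Rightarrow> real) \<Rightarrow> ennreal" where
  "fisher_shift1 g = (\<integral>\<^sup>+ x. ennreal ((deriv (\<lambda>\<tau>. g (x - \<tau>)) 0)\<^sup>2 / g x) \<partial>lborel)"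

definition conv_first :: "(real \<times> 'b \<Rightarrow> real) \<Rightarrow> (real \<Rightarrow> real) \<Rightarrow> real \<times> 'b \<Rightarrow> real" where
  "conv_first p1 p2 z = (\<integral> s. p1 (s, snd z) * p2 (fst z - s) \<partial>lborel)"

end

theory Submission
  imports Defs
begin

text \<open>Fix a section \<open>q = p\<^sub>1(\<cdot>, x\<^sub>3)\<close> and write \<open>u = q'/q\<close>, \<open>v = p\<^sub>2'/p\<^sub>2\<close> for the scores.
  Differentiating the convolution \<open>r = q * p\<^sub>2\<close> on either factor shows that for every \<open>a + b = 1\<close>
  \<open>r'(z) = \<integral> (a u(s) + b v(z - s)) q(s) p\<^sub>2(z - s) ds\<close>.
  By Cauchy--Schwarz with respect to the weight \<open>q(s) p\<^sub>2(z - s)\<close>, whose mass is \<open>r(z)\<close>,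
  \<open>r'(z)\<^sup>2 / r(z) \<le> \<integral> (a u(s) + b v(z - s))\<^sup>2 q(s) p\<^sub>2(z - s) ds\<close>.
  Integrating in \<open>z\<close> first, the cross term vanishes because \<open>\<integral> p\<^sub>2' = 0\<close>, which leaves
  \<open>a\<^sup>2 J(q) + b\<^sup>2 J(p\<^sub>2) \<integral> q\<close>. Integrating over \<open>x\<^sub>3\<close> gives
  \<open>J\<^sub>r \<le> a\<^sup>2 J\<^sub>1 + b\<^sup>2 J\<^sub>2\<close>, and the choice \<open>a = J\<^sub>2 / (J\<^sub>1 + J\<^sub>2)\<close> turns this into the harmonic bound.\<close>

lemma deriv_reflect_shift:
  fixes g :: "real \<Rightarrow> real"
  assumes "g differentiable (at x)"
  shows "deriv (\<lambda>\<tau>. g (x - \<tau>)) 0 = - deriv g x"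
proof -
  have "(g has_real_derivative deriv g x) (at (x - 0))"
    using assms DERIV_deriv_iff_real_differentiable by simp
  then have "((\<lambda>\<tau>. g (x - \<tau>)) has_real_derivative deriv g x * (0 - 1)) (at 0)"
    by (rule DERIV_chain2) (auto intro!: derivative_eq_intros)
  then show ?thesis by (simp add: DERIV_imp_deriv)
qed

lemma difference_quotient_LIMSEQ_deriv:
  fixes g :: "real \<Rightarrow> real"
  assumes "g differentiable (at x)"
  shows "(\<lambda>i. (g (x + 1 / Suc i) - g x) * Suc i) \<longlonglongrightarrow> deriv g x"
proof -
  have "((\<lambda>h. (g (x + h) - g x) / h) \<longlongrightarrow> deriv g x) (at 0)"
    using assms DERIV_deriv_iff_real_differentiable DERIV_def by blast
  moreover have "filterlim (\<lambda>i::nat. 1 / real (Suc i)) (at 0) sequentially"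
  proof (rule filterlim_atI)
    show "(\<lambda>i::nat. 1 / real (Suc i)) \<longlonglongrightarrow> 0"
      using LIMSEQ_inverse_real_of_nat by (simp add: inverse_eq_divide)
  qed auto
  ultimately have "(\<lambda>i::nat. (g (x + 1 / Suc i) - g x) / (1 / Suc i)) \<longlonglongrightarrow> deriv g x"
    using filterlim_compose by fastforce
  then show ?thesis by simp
qed

lemma borel_measurable_deriv_fst:
  fixes p :: "real \<times> 'b \<Rightarrow> real"
  assumes [measurable]: "p \<in> borel_measurable (lborel \<Otimes>\<^sub>M M)"
    and diff: "\<And>x y. (\<lambda>s. p (s, y)) differentiable (at x)"
  shows "(\<lambda>z. deriv (\<lambda>s. p (s, snd z)) (fst z)) \<in> borel_measurable (lborel \<Otimes>\<^sub>M M)"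
proof (rule borel_measurable_LIMSEQ_real)
  show "(\<lambda>z. (p (fst z + 1 / Suc i, snd z) - p z) * Suc i) \<in> borel_measurable (lborel \<Otimes>\<^sub>M M)" for i
    by measurable
  show "(\<lambda>i. (p (fst z + 1 / Suc i, snd z) - p z) * Suc i) \<longlonglongrightarrow> deriv (\<lambda>s. p (s, snd z)) (fst z)" for z
    using difference_quotient_LIMSEQ_deriv[OF diff] by (cases z) simp
qed

lemma borel_measurable_deriv:
  fixes g :: "real \<Rightarrow> real"
  assumes "\<And>x. g differentiable (at x)"
  shows "deriv g \<in> borel_measurable borel"
proof (rule borel_measurable_LIMSEQ_real)
  have "continuous_on UNIV g"
    using assms by (simp add: continuous_at_imp_continuous_on differentiable_imp_continuous_within)
  then have [measurable]: "g \<in> borel_measurable borel" by (rule borel_measurable_continuous_onI)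
  show "(\<lambda>x. (g (x + 1 / Suc i) - g x) * Suc i) \<in> borel_measurable borel" for i
    by measurable
  show "(\<lambda>i. (g (x + 1 / Suc i) - g x) * Suc i) \<longlonglongrightarrow> deriv g x" for x
    using assms by (rule difference_quotient_LIMSEQ_deriv)
qed

lemma deriv_eq_0_at_zero_of_nonneg:
  fixes g :: "real \<Rightarrow> real"
  assumes "g differentiable (at x)" "\<And>y. g y \<ge> 0" "g x = 0"
  shows "deriv g x = 0"
proof -
  have "(g has_real_derivative deriv g x) (at x)"
    using assms DERIV_deriv_iff_real_differentiable by blast
  then show ?thesis
    by (rule DERIV_local_min[of _ _ _ 1]) (use assms in auto)
qed

lemma abs_le_square_divide_add:
  fixes g d :: real
  assumes "g \<ge> 0" "g = 0 \<Longrightarrow> d = 0"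
  shows "\<bar>d\<bar> \<le> d\<^sup>2 / g + g"
proof (cases "g = 0")
  case False
  then have "g > 0" using assms by simp
  moreover have "\<bar>d\<bar> * g \<le> d\<^sup>2 + g * g"
  proof (cases "\<bar>d\<bar> \<le> g")
    case True
    then have "\<bar>d\<bar> * g \<le> g * g" using \<open>g > 0\<close> by (intro mult_right_mono) auto
    then show ?thesis using zero_le_power2[of d] by linarith
  next
    case False
    then have "\<bar>d\<bar> * g \<le> \<bar>d\<bar> * \<bar>d\<bar>" using \<open>g > 0\<close> by (intro mult_left_mono) auto
    also have "\<dots> \<le> d\<^sup>2 + g * g" by (simp add: power2_eq_square)
    finally show ?thesis .
  qed
  ultimately show ?thesis by (simp add: field_simps power2_eq_square)
qed (use assms in simp)

lemma set_integral_Icc_eq_diff: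
  fixes F F' :: "real \<Rightarrow> real"
  assumes "a \<le> b" and F: "\<And>x. (F has_real_derivative F' x) (at x)"
    and "set_integrable lborel {a..b} F'"
  shows "(\<integral>x\<in>{a..b}. F' x \<partial>lborel) = F b - F a"
proof -
  have "(F' has_integral (F b - F a)) {a..b}"
    using assms(1) by (intro fundamental_theorem_of_calculus)
      (auto intro: has_field_derivative_at_within[OF F]
        simp: has_real_derivative_iff_has_vector_derivative[symmetric])
  then show ?thesis
    using set_borel_integral_eq_integral(2)[OF assms(3)] by (simp add: integral_unique)
qed

lemma integrable_mult_bounded:
  fixes f \<phi> :: "real \<Rightarrow> real"
  assumes "integrable lborel f" "\<phi> \<in> borel_measurable borel" "\<And>x. \<bar>\<phi> x\<bar> \<le> B"
  shows "integrable lborel (\<lambda>t. f t * \<phi> t)"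
proof (rule Bochner_Integration.integrable_bound[where f="\<lambda>t. B * \<bar>f t\<bar>"])
  show "integrable lborel (\<lambda>t. B * \<bar>f t\<bar>)" using assms(1) by auto
  show "(\<lambda>t. f t * \<phi> t) \<in> borel_measurable lborel"
    using assms(1,2) by (auto dest: borel_measurable_integrable)
  show "AE x in lborel. norm (f x * \<phi> x) \<le> norm (B * \<bar>f x\<bar>)"
    using assms(3) by (auto simp: abs_mult intro!: AE_I2)
      (smt (verit, best) abs_ge_zero mult.commute mult_right_mono)
qed

lemma lborel_integrable_reflect:
  fixes f :: "real \<Rightarrow> real"
  assumes "integrable lborel f"
  shows "integrable lborel (\<lambda>t. f (u - t))"
  using lborel_integrable_real_affine[OF assms, of "-1" u] by simp

lemma lborel_integral_reflect:
  fixes f :: "real \<Rightarrow> real"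
  shows "(\<integral>t. f (u - t) \<partial>lborel) = (\<integral>t. f t \<partial>lborel)"
  using lborel_integral_real_affine[of "-1" f u] by simp

lemma nn_integral_lborel_translate:
  fixes f :: "real \<Rightarrow> ennreal"
  assumes "f \<in> borel_measurable borel"
  shows "(\<integral>\<^sup>+t. f (t - u) \<partial>lborel) = (\<integral>\<^sup>+t. f t \<partial>lborel)"
  using nn_integral_real_affine[OF assms, of 1 "-u"] by simp

lemma fisher_shift1_eq:
  assumes "\<And>x. g differentiable (at x)"
  shows "fisher_shift1 g = (\<integral>\<^sup>+x. ennreal ((deriv g x)\<^sup>2 / g x) \<partial>lborel)"
  unfolding fisher_shift1_def by (intro nn_integral_cong) (simp add: deriv_reflect_shift[OF assms])

subsection \<open>Densities of finite Fisher information on the line\<close>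

locale finite_fisher_density =
  fixes g :: "real \<Rightarrow> real"
  assumes differentiable: "\<And>x. g differentiable (at x)"
    and nonneg: "\<And>x. g x \<ge> 0"
    and mass_finite: "(\<integral>\<^sup>+x. ennreal (g x) \<partial>lborel) < \<infinity>"
    and fisher_finite: "fisher_shift1 g < \<infinity>"
begin

lemma isCont: "isCont g x"
  using differentiable differentiable_imp_continuous_within by blast

lemma borel_measurable[measurable]: "g \<in> borel_measurable borel"
  using differentiable
  by (intro borel_measurable_continuous_onI)
    (simp add: continuous_at_imp_continuous_on differentiable_imp_continuous_within)

lemma borel_measurable_deriv[measurable]: "deriv g \<in> borel_measurable borel"
  using differentiable by (rule borel_measurable_deriv)

lemma has_real_derivative: "(g has_real_derivative deriv g x) (at x)"
  using differentiable DERIV_deriv_iff_real_differentiable by blast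

lemma integrable: "integrable lborel g"
  unfolding integrable_iff_bounded using mass_finite nonneg by simp

lemma integrable_fisher: "integrable lborel (\<lambda>x. (deriv g x)\<^sup>2 / g x)"
proof -
  have "0 \<le> (deriv g x)\<^sup>2 / g x" "\<bar>g x\<bar> = g x" for x
    using nonneg[of x] by simp_all
  then show ?thesis
    unfolding integrable_iff_bounded using fisher_finite
    by (simp add: fisher_shift1_eq[OF differentiable])
qed

lemma fisher_shift1_eq_integral:
  "fisher_shift1 g = ennreal (\<integral>x. (deriv g x)\<^sup>2 / g x \<partial>lborel)"
  unfolding fisher_shift1_eq[OF differentiable]
  by (rule nn_integral_eq_integral[OF integrable_fisher]) (simp add: nonneg)

text \<open>A zero of \<open>g \<ge> 0\<close> is a minimum, so \<open>g' = 0\<close> there and \<open>\<bar>g'\<bar> \<le> g'\<^sup>2/g + g\<close> holds everywhere.\<close>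
lemma integrable_deriv: "integrable lborel (deriv g)"
  unfolding integrable_iff_bounded
proof
  have "(\<integral>\<^sup>+x. ennreal (norm (deriv g x)) \<partial>lborel)
      \<le> (\<integral>\<^sup>+x. ennreal ((deriv g x)\<^sup>2 / g x) + ennreal (g x) \<partial>lborel)"
    using abs_le_square_divide_add[OF nonneg deriv_eq_0_at_zero_of_nonneg[OF differentiable nonneg]]
    by (intro nn_integral_mono) (auto simp: nonneg ennreal_plus[symmetric] simp del: ennreal_plus)
  also have "\<dots> = fisher_shift1 g + (\<integral>\<^sup>+x. ennreal (g x) \<partial>lborel)"
    by (subst nn_integral_add) (auto simp: fisher_shift1_eq[OF differentiable])
  also have "\<dots> < \<infinity>" using mass_finite fisher_finite by simp
  finally show "(\<integral>\<^sup>+x. ennreal (norm (deriv g x)) \<partial>lborel) < \<infinity>" .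
qed simp

lemma integral_Icc_deriv: "a \<le> b \<Longrightarrow> (\<integral>x\<in>{a..b}. deriv g x \<partial>lborel) = g b - g a"
  by (rule set_integral_Icc_eq_diff) (auto intro: has_real_derivative
      simp: set_integrable_def intro!: integrable_mult_indicator[OF _ integrable_deriv, simplified])

lemma bounded: "\<exists>B. \<forall>x. \<bar>g x\<bar> \<le> B"
proof -
  have set_integral_bound: "\<bar>(\<integral>x\<in>A. deriv g x \<partial>lborel)\<bar> \<le> (\<integral>x. \<bar>deriv g x\<bar> \<partial>lborel)"
    if "A \<in> sets borel" for A
  proof -
    have "\<bar>(\<integral>x\<in>A. deriv g x \<partial>lborel)\<bar> \<le> (\<integral>x. \<bar>indicator A x *\<^sub>R deriv g x\<bar> \<partial>lborel)"
      unfolding set_lebesgue_integral_def by (rule integral_abs_bound)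
    also have "\<dots> \<le> (\<integral>x. \<bar>deriv g x\<bar> \<partial>lborel)"
      using that integrable_deriv integrable_mult_indicator[OF _ integrable_deriv, of A]
      by (intro integral_mono) (auto simp: indicator_def)
    finally show ?thesis .
  qed
  have "\<bar>g x\<bar> \<le> g 0 + (\<integral>x. \<bar>deriv g x\<bar> \<partial>lborel)" for x
    using integral_Icc_deriv[of 0 x] integral_Icc_deriv[of x 0]
      set_integral_bound[of "{0..x}"] set_integral_bound[of "{x..0}"] nonneg[of x] nonneg[of 0]
    by (cases "0 \<le> x") auto
  then show ?thesis by blast
qed

end

subsection \<open>Differentiating a convolution\<close>

lemma isCont_convolution_bounded:
  fixes f \<phi> :: "real \<Rightarrow> real"
  assumes f: "integrable lborel f" and \<phi>: "\<And>x. isCont \<phi> x" "\<And>x. \<bar>\<phi> x\<bar> \<le> B"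
  shows "isCont (\<lambda>x. \<integral>t. f (x - t) * \<phi> t \<partial>lborel) x"
proof -
  have [measurable]: "f \<in> borel_measurable borel"
    using f by (auto dest: borel_measurable_integrable)
  have reflect: "(\<integral>t. f (y - t) * \<phi> t \<partial>lborel) = (\<integral>s. f s * \<phi> (y - s) \<partial>lborel)" for y
    using lborel_integral_reflect[of "\<lambda>s. f s * \<phi> (y - s)" y] by simp
  have "isCont (\<lambda>x. \<integral>s. f s * \<phi> (x - s) \<partial>lborel) x"
  proof (rule continuous_at_sequentiallyI)
    fix u assume u: "u \<longlonglongrightarrow> x"
    show "(\<lambda>n. \<integral>s. f s * \<phi> (u n - s) \<partial>lborel) \<longlonglongrightarrow> (\<integral>s. f s * \<phi> (x - s) \<partial>lborel)"
    proof (rule integral_dominated_convergence[where w="\<lambda>s. \<bar>f s\<bar> * B"])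
      have "continuous_on UNIV \<phi>" using \<phi>(1) by (simp add: continuous_at_imp_continuous_on)
      then have [measurable]: "\<phi> \<in> borel_measurable borel" by (rule borel_measurable_continuous_onI)
      show "(\<lambda>s. f s * \<phi> (u n - s)) \<in> borel_measurable lborel" for n by measurable
      show "(\<lambda>s. f s * \<phi> (x - s)) \<in> borel_measurable lborel" by measurable
      show "integrable lborel (\<lambda>s. \<bar>f s\<bar> * B)" using f by auto
      show "AE s in lborel. (\<lambda>n. f s * \<phi> (u n - s)) \<longlonglongrightarrow> f s * \<phi> (x - s)"
        using u by (intro AE_I2 tendsto_mult tendsto_const isCont_tendsto_compose[OF \<phi>(1)] tendsto_diff)
      show "AE s in lborel. norm (f s * \<phi> (u n - s)) \<le> \<bar>f s\<bar> * B" for n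
        using \<phi>(2) by (auto intro!: AE_I2 mult_left_mono simp: abs_mult)
    qed
  qed
  then show ?thesis by (simp add: reflect)
qed

lemma integrable_indicator_convolution_bounded:
  fixes f \<phi> :: "real \<Rightarrow> real"
  assumes f: "integrable lborel f" and [measurable]: "\<phi> \<in> borel_measurable borel"
    and \<phi>: "\<And>x. \<bar>\<phi> x\<bar> \<le> B"
  shows "integrable (lborel \<Otimes>\<^sub>M lborel) (\<lambda>(x, t). indicator {c..u} x * f (x - t) * \<phi> t :: real)"
proof (rule lborel_pair.Fubini_integrable)
  have [measurable]: "f \<in> borel_measurable borel"
    using f by (auto dest: borel_measurable_integrable)
  let ?F = "\<lambda>(x, t). indicator {c..u} x * f (x - t) * \<phi> t :: real"
  let ?C = "(\<integral>s. \<bar>f s\<bar> \<partial>lborel) * B"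
  have int_x: "integrable lborel (\<lambda>t. f (x - t) * \<phi> t)" for x
    by (rule integrable_mult_bounded[OF lborel_integrable_reflect[OF f] _ \<phi>]) simp
  show "?F \<in> borel_measurable (lborel \<Otimes>\<^sub>M lborel)" by measurable
  show "AE x in lborel. integrable lborel (\<lambda>t. ?F (x, t))"
    using int_x by (auto intro!: AE_I2 simp: mult.assoc)
  show "integrable lborel (\<lambda>x. \<integral>t. norm (?F (x, t)) \<partial>lborel)"
  proof (rule Bochner_Integration.integrable_bound[where f="\<lambda>x. indicator {c..u} x *\<^sub>R ?C"])
    show "integrable lborel (\<lambda>x. indicator {c..u} x *\<^sub>R ?C)"
      by (rule integrableI_bounded_set_indicator[where B="\<bar>?C\<bar>"]) (auto simp: emeasure_lborel_Icc_eq)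
    show "(\<lambda>x. \<integral>t. norm (?F (x, t)) \<partial>lborel) \<in> borel_measurable lborel"
      by measurable
    have "(\<integral>t. \<bar>f (x - t) * \<phi> t\<bar> \<partial>lborel) \<le> ?C" for x
    proof -
      have "(\<integral>t. \<bar>f (x - t) * \<phi> t\<bar> \<partial>lborel) \<le> (\<integral>t. \<bar>f (x - t)\<bar> * B \<partial>lborel)"
        using integrable_abs[OF int_x] lborel_integrable_reflect[OF f, of x] \<phi>
        by (intro integral_mono) (auto simp: abs_mult intro!: mult_left_mono)
      then show ?thesis using lborel_integral_reflect[of "\<lambda>s. \<bar>f s\<bar>" x] by simp
    qed
    moreover have "0 \<le> B" using \<phi>[of 0] by linarith
    ultimately show "AE x in lborel. norm (\<integral>t. norm (?F (x, t)) \<partial>lborel)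
        \<le> norm (indicator {c..u} x *\<^sub>R ?C)"
      by (intro AE_I2) (auto simp: indicator_def abs_mult mult.assoc)
  qed
qed

lemma convolution_diff_eq_set_integral:
  fixes f \<phi> :: "real \<Rightarrow> real"
  assumes f: "\<And>x. f differentiable (at x)" "integrable lborel f" "integrable lborel (deriv f)"
    and \<phi>: "\<phi> \<in> borel_measurable borel" "\<And>x. \<bar>\<phi> x\<bar> \<le> B" and "c \<le> u"
  shows "(\<integral>t. f (u - t) * \<phi> t \<partial>lborel) - (\<integral>t. f (c - t) * \<phi> t \<partial>lborel)
       = (\<integral>x\<in>{c..u}. (\<integral>t. deriv f (x - t) * \<phi> t \<partial>lborel) \<partial>lborel)"
proof -
  have f_diff_eq: "f (u - t) - f (c - t) = (\<integral>x\<in>{c..u}. deriv f (x - t) \<partial>lborel)" for t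
  proof (rule set_integral_Icc_eq_diff[symmetric, OF \<open>c \<le> u\<close>])
    show "((\<lambda>x. f (x - t)) has_real_derivative deriv f (x - t)) (at x)" for x
    proof -
      have "(f has_real_derivative deriv f (x - t)) (at (x - t))"
        using f(1) DERIV_deriv_iff_real_differentiable by blast
      moreover have "((\<lambda>x. x - t) has_real_derivative 1) (at x)"
        by (auto intro!: derivative_eq_intros)
      ultimately show ?thesis using DERIV_chain2 by fastforce
    qed
    have "integrable lborel (\<lambda>x. deriv f (x - t))"
      using lborel_integrable_real_affine[OF f(3), of 1 "-t"] by simp
    then show "set_integrable lborel {c..u} (\<lambda>x. deriv f (x - t))"
      unfolding set_integrable_def using borel_measurable_deriv[OF f(1)]
      by (intro integrable_mult_indicator) auto
  qed
  have "(\<integral>t. f (u - t) * \<phi> t \<partial>lborel) - (\<integral>t. f (c - t) * \<phi> t \<partial>lborel)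
      = (\<integral>t. (f (u - t) - f (c - t)) * \<phi> t \<partial>lborel)"
    using integrable_mult_bounded[OF lborel_integrable_reflect[OF f(2)] \<phi>]
    by (simp add: left_diff_distrib)
  also have "\<dots> = (\<integral>t. (\<integral>x. indicator {c..u} x * deriv f (x - t) * \<phi> t \<partial>lborel) \<partial>lborel)"
    unfolding f_diff_eq set_lebesgue_integral_def by simp
  also have "\<dots> = (\<integral>x. (\<integral>t. indicator {c..u} x * deriv f (x - t) * \<phi> t \<partial>lborel) \<partial>lborel)"
    by (rule lborel_pair.Fubini_integral
        [OF integrable_indicator_convolution_bounded[OF f(3) \<phi>]])
  also have "\<dots> = (\<integral>x\<in>{c..u}. (\<integral>t. deriv f (x - t) * \<phi> t \<partial>lborel) \<partial>lborel)"
    unfolding set_lebesgue_integral_def by (simp add: mult.assoc)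
  finally show ?thesis .
qed

lemma has_real_derivative_convolution_bounded:
  fixes f \<phi> :: "real \<Rightarrow> real"
  assumes f: "\<And>x. f differentiable (at x)" "integrable lborel f" "integrable lborel (deriv f)"
    and \<phi>: "\<And>x. isCont \<phi> x" "\<And>x. \<bar>\<phi> x\<bar> \<le> B"
  shows "((\<lambda>z. \<integral>t. f (z - t) * \<phi> t \<partial>lborel) has_real_derivative
           (\<integral>t. deriv f (z - t) * \<phi> t \<partial>lborel)) (at z)"
proof -
  define C where "C u = (\<integral>t. f (u - t) * \<phi> t \<partial>lborel)" for u
  define G where "G x = (\<integral>t. deriv f (x - t) * \<phi> t \<partial>lborel)" for x
  have "\<phi> \<in> borel_measurable borel"
    using \<phi>(1) by (intro borel_measurable_continuous_onI) (simp add: continuous_at_imp_continuous_on)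
  then have diff_eq: "C u - C c = (\<integral>x\<in>{c..u}. G x \<partial>lborel)" if "c \<le> u" for c u
    unfolding C_def G_def by (rule convolution_diff_eq_set_integral[OF f _ \<phi>(2) that])
  have C_eq: "C (z - 1) + (LBINT x=z - 1..u. G x) = C u" for u
  proof (cases "z - 1 \<le> u")
    case True
    then show ?thesis using diff_eq[OF True] by (simp add: interval_integral_Icc)
  next
    case False
    then show ?thesis using diff_eq[of u "z - 1"]
      by (subst interval_integral_endpoints_reverse) (simp add: interval_integral_Icc)
  qed
  have "((\<lambda>u. LBINT x=z - 1..u. G x) has_vector_derivative G z) (at z within {z - 1..z + 1})"
    unfolding G_def using isCont_convolution_bounded[OF f(3) \<phi>]
    by (intro interval_integral_FTC2) (auto intro: continuous_at_imp_continuous_on)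
  then have "((\<lambda>u. LBINT x=z - 1..u. G x) has_vector_derivative G z) (at z)"
    by (subst (asm) at_within_interior) auto
  then have "((\<lambda>u. C (z - 1) + (LBINT x=z - 1..u. G x)) has_real_derivative G z) (at z)"
    by (auto simp: has_real_derivative_iff_has_vector_derivative intro!: derivative_eq_intros)
  then show ?thesis unfolding C_eq by (simp add: C_def G_def)
qed

context finite_fisher_density
begin

text \<open>\<open>\<integral> g(z - t) dt\<close> does not depend on \<open>z\<close>, so its derivative \<open>\<integral> g'\<close> vanishes.\<close>
lemma integral_deriv_eq_0: "(\<integral>x. deriv g x \<partial>lborel) = 0"
proof -
  have "((\<lambda>z. \<integral>t. g (z - t) * 1 \<partial>lborel) has_real_derivative
          (\<integral>t. deriv g (0 - t) * 1 \<partial>lborel)) (at 0)"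
    by (rule has_real_derivative_convolution_bounded[OF differentiable integrable integrable_deriv,
          of "\<lambda>_. 1" 1]) auto
  then have "((\<lambda>z. \<integral>t. g t \<partial>lborel) has_real_derivative (\<integral>x. deriv g x \<partial>lborel)) (at 0)"
    using lborel_integral_reflect[of g] lborel_integral_reflect[of "deriv g" 0] by simp
  then show ?thesis using DERIV_const DERIV_unique by blast
qed

lemma nn_integral_affine_score_square:
  assumes pos: "\<And>x. g x > 0" and prob: "(\<integral>t. g t \<partial>lborel) = 1"
  shows "(\<integral>\<^sup>+t. ennreal ((c + b * (deriv g t / g t))\<^sup>2 * g t) \<partial>lborel)
       = ennreal (c\<^sup>2 + b\<^sup>2 * (\<integral>t. (deriv g t)\<^sup>2 / g t \<partial>lborel))"
proof -
  have expand: "(c + b * (deriv g t / g t))\<^sup>2 * g t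
      = c\<^sup>2 * g t + (2 * c * b) * deriv g t + b\<^sup>2 * ((deriv g t)\<^sup>2 / g t)" for t
    using pos[of t] by (simp add: field_simps power2_eq_square)
  have i1: "integrable lborel (\<lambda>t. c\<^sup>2 * g t)" using integrable by simp
  have i2: "integrable lborel (\<lambda>t. (2 * c * b) * deriv g t)" using integrable_deriv by simp
  have i3: "integrable lborel (\<lambda>t. b\<^sup>2 * ((deriv g t)\<^sup>2 / g t))"
    using integrable_fisher by (rule integrable_mult_right)
  have "integrable lborel (\<lambda>t. (c + b * (deriv g t / g t))\<^sup>2 * g t)"
    unfolding expand by (intro Bochner_Integration.integrable_add i1 i2 i3)
  then have "(\<integral>\<^sup>+t. ennreal ((c + b * (deriv g t / g t))\<^sup>2 * g t) \<partial>lborel)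
     = ennreal (\<integral>t. (c + b * (deriv g t / g t))\<^sup>2 * g t \<partial>lborel)"
    using pos by (intro nn_integral_eq_integral AE_I2) (simp_all add: less_imp_le)
  also have "(\<integral>t. (c + b * (deriv g t / g t))\<^sup>2 * g t \<partial>lborel)
     = c\<^sup>2 + b\<^sup>2 * (\<integral>t. (deriv g t)\<^sup>2 / g t \<partial>lborel)"
    unfolding expand
    by (simp only: Bochner_Integration.integral_add[OF Bochner_Integration.integrable_add[OF i1 i2] i3]
        Bochner_Integration.integral_add[OF i1 i2] integral_mult_right_zero integral_deriv_eq_0 prob)
  finally show ?thesis .
qed

end

lemma Cauchy_Schwarz_weighted_mean:
  fixes h w :: "real \<Rightarrow> real"
  assumes w: "\<And>s. w s \<ge> 0" "integrable lborel w"
    and [measurable]: "h \<in> borel_measurable borel"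
  shows "ennreal ((\<integral>s. h s * w s \<partial>lborel)\<^sup>2 / (\<integral>s. w s \<partial>lborel))
         \<le> (\<integral>\<^sup>+s. ennreal ((h s)\<^sup>2 * w s) \<partial>lborel)"
proof -
  have [measurable]: "w \<in> borel_measurable borel" using w by (auto dest: borel_measurable_integrable)
  define X where "X = (\<integral>\<^sup>+s. ennreal ((h s)\<^sup>2 * w s) \<partial>lborel)"
  define W where "W = (\<integral>s. w s \<partial>lborel)"
  define I where "I = (\<integral>s. h s * w s \<partial>lborel)"
  have "W \<ge> 0" unfolding W_def using w by auto
  show ?thesis
  proof (cases "X = \<infinity> \<or> W = 0")
    case True then show ?thesis unfolding X_def[symmetric] W_def[symmetric] by auto
  next
    case False
    with \<open>W \<ge> 0\<close> obtain x where x: "X = ennreal x" "x \<ge> 0" and "W > 0"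
      by (cases X) auto
    have "ennreal \<bar>I\<bar> \<le> (\<integral>\<^sup>+s. ennreal (norm (h s * w s)) \<partial>lborel)"
    proof (cases "integrable lborel (\<lambda>s. h s * w s)")
      case True
      then show ?thesis unfolding I_def using integral_norm_bound_ennreal[OF True] by simp
    qed (simp add: I_def not_integrable_integral_eq)
    also have "\<dots> = (\<integral>\<^sup>+s. ennreal (\<bar>h s\<bar> * sqrt (w s)) * ennreal (sqrt (w s)) \<partial>lborel)"
      by (intro nn_integral_cong)
        (auto simp: ennreal_mult[symmetric] abs_mult mult.assoc w real_sqrt_mult[symmetric])
    finally have "(ennreal \<bar>I\<bar>)\<^sup>2
        \<le> (\<integral>\<^sup>+s. ennreal (\<bar>h s\<bar> * sqrt (w s)) * ennreal (sqrt (w s)) \<partial>lborel)\<^sup>2"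
      by (intro power_mono) auto
    also have "\<dots> \<le> (\<integral>\<^sup>+s. ennreal (\<bar>h s\<bar> * sqrt (w s)) ^ 2 \<partial>lborel)
                  * (\<integral>\<^sup>+s. ennreal (sqrt (w s)) ^ 2 \<partial>lborel)"
      by (rule Cauchy_Schwarz_nn_integral) auto
    also have "(\<integral>\<^sup>+s. ennreal (\<bar>h s\<bar> * sqrt (w s)) ^ 2 \<partial>lborel) = X"
      unfolding X_def by (intro nn_integral_cong) (auto simp: ennreal_power power_mult_distrib w)
    also have "(\<integral>\<^sup>+s. ennreal (sqrt (w s)) ^ 2 \<partial>lborel) = ennreal W"
      unfolding W_def using w
      by (subst nn_integral_eq_integral[symmetric]) (auto intro!: nn_integral_cong simp: ennreal_power)
    finally have "I\<^sup>2 \<le> x * W"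
      using x \<open>W > 0\<close> by (simp add: ennreal_power ennreal_mult[symmetric])
    then show ?thesis
      unfolding X_def[symmetric] W_def[symmetric] I_def[symmetric] x
      using \<open>W > 0\<close> by (intro ennreal_leI) (simp add: divide_le_eq mult.commute)
  qed
qed

subsection \<open>The Fisher information of a convolution on the line\<close>

lemma convolution_has_real_derivative_mix:
  fixes q p :: "real \<Rightarrow> real"
  assumes q: "finite_fisher_density q" and p: "finite_fisher_density p" and "a + b = 1"
  shows "((\<lambda>z. \<integral>s. q s * p (z - s) \<partial>lborel) has_real_derivative
           (\<integral>s. a * deriv q s * p (z - s) + b * q s * deriv p (z - s) \<partial>lborel)) (at z)"
proof -
  interpret q: finite_fisher_density q by (rule q)
  interpret p: finite_fisher_density p by (rule p)
  obtain Bq where Bq: "\<And>x. \<bar>q x\<bar> \<le> Bq" using q.bounded by blast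
  obtain Bp where Bp: "\<And>x. \<bar>p x\<bar> \<le> Bp" using p.bounded by blast
  let ?r = "\<lambda>z. \<integral>s. q s * p (z - s) \<partial>lborel"
  define R1 where "R1 = (\<integral>s. deriv q s * p (z - s) \<partial>lborel)"
  define R2 where "R2 = (\<integral>s. q s * deriv p (z - s) \<partial>lborel)"
  have "((\<lambda>z. \<integral>t. q (z - t) * p t \<partial>lborel) has_real_derivative
          (\<integral>t. deriv q (z - t) * p t \<partial>lborel)) (at z)"
    by (rule has_real_derivative_convolution_bounded[OF q.differentiable q.integrable
          q.integrable_deriv p.isCont Bp])
  moreover have "(\<lambda>z. \<integral>t. q (z - t) * p t \<partial>lborel) = ?r"
  proof
    fix y show "(\<integral>t. q (y - t) * p t \<partial>lborel) = ?r y"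
      using lborel_integral_reflect[of "\<lambda>t. q (y - t) * p t" y] by simp
  qed
  moreover have "(\<integral>t. deriv q (z - t) * p t \<partial>lborel) = R1"
    unfolding R1_def using lborel_integral_reflect[of "\<lambda>t. deriv q (z - t) * p t" z] by simp
  ultimately have D1: "(?r has_real_derivative R1) (at z)" by simp
  have "((\<lambda>z. \<integral>t. p (z - t) * q t \<partial>lborel) has_real_derivative
          (\<integral>t. deriv p (z - t) * q t \<partial>lborel)) (at z)"
    by (rule has_real_derivative_convolution_bounded[OF p.differentiable p.integrable
          p.integrable_deriv q.isCont Bq])
  then have D2: "(?r has_real_derivative R2) (at z)"
    unfolding R2_def by (simp add: mult.commute)
  have "integrable lborel (\<lambda>s. deriv q s * p (z - s))"
    by (rule integrable_mult_bounded[OF q.integrable_deriv _ Bp]) simp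
  moreover have "integrable lborel (\<lambda>s. q s * deriv p (z - s))"
    using integrable_mult_bounded[OF lborel_integrable_reflect[OF p.integrable_deriv, of z] _ Bq]
    by (simp add: mult.commute)
  ultimately have "(\<integral>s. a * deriv q s * p (z - s) + b * q s * deriv p (z - s) \<partial>lborel)
      = a * R1 + b * R2"
    unfolding R1_def R2_def by (simp add: mult.assoc)
  also have "\<dots> = R1"
    using DERIV_unique[OF D1 D2] \<open>a + b = 1\<close> by (metis distrib_right mult_1)
  finally show ?thesis using D1 by simp
qed

lemma nn_integral_translate_score_square:
  fixes p :: "real \<Rightarrow> real"
  assumes p: "finite_fisher_density p" and pos: "\<And>x. p x > 0" and prob: "(\<integral>t. p t \<partial>lborel) = 1"
  shows "(\<integral>\<^sup>+z. ennreal ((c + b * (deriv p (z - s) / p (z - s)))\<^sup>2 * p (z - s)) \<partial>lborel)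
       = ennreal (c\<^sup>2) + ennreal (b\<^sup>2) * fisher_shift1 p"
proof -
  interpret p: finite_fisher_density p by (rule p)
  have "(\<integral>\<^sup>+z. ennreal ((c + b * (deriv p (z - s) / p (z - s)))\<^sup>2 * p (z - s)) \<partial>lborel)
      = (\<integral>\<^sup>+t. ennreal ((c + b * (deriv p t / p t))\<^sup>2 * p t) \<partial>lborel)"
    by (rule nn_integral_lborel_translate[of "\<lambda>t. ennreal ((c + b * (deriv p t / p t))\<^sup>2 * p t)"])
      measurable
  also have "\<dots> = ennreal (c\<^sup>2 + b\<^sup>2 * (\<integral>t. (deriv p t)\<^sup>2 / p t \<partial>lborel))"
    by (rule p.nn_integral_affine_score_square[OF pos prob])
  also have "\<dots> = ennreal (c\<^sup>2) + ennreal (b\<^sup>2) * fisher_shift1 p"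
  proof -
    have "0 \<le> (\<integral>t. (deriv p t)\<^sup>2 / p t \<partial>lborel)"
      using pos by (intro integral_nonneg_AE AE_I2) (simp add: less_imp_le)
    then show ?thesis by (simp add: p.fisher_shift1_eq_integral ennreal_mult)
  qed
  finally show ?thesis .
qed

lemma nn_integral_convolution_score_le:
  fixes q p :: "real \<Rightarrow> real"
  assumes q: "finite_fisher_density q" and p: "finite_fisher_density p"
    and pos: "\<And>x. p x > 0" and prob: "(\<integral>t. p t \<partial>lborel) = 1"
  shows "(\<integral>\<^sup>+z. ennreal ((\<integral>s. a * deriv q s * p (z - s) + b * q s * deriv p (z - s) \<partial>lborel)\<^sup>2
                  / (\<integral>s. q s * p (z - s) \<partial>lborel)) \<partial>lborel)
         \<le> ennreal (a\<^sup>2) * fisher_shift1 q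
           + ennreal (b\<^sup>2) * fisher_shift1 p * (\<integral>\<^sup>+s. ennreal (q s) \<partial>lborel)"
proof -
  interpret q: finite_fisher_density q by (rule q)
  interpret p: finite_fisher_density p by (rule p)
  define u where "u s = deriv q s / q s" for s
  define v where "v t = deriv p t / p t" for t
  let ?w = "\<lambda>z s. q s * p (z - s)"
  let ?h = "\<lambda>z s. a * u s + b * v (z - s)"
  have w_nonneg: "0 \<le> ?w z s" for z s using q.nonneg[of s] pos[of "z - s"] by simp
  \<comment> \<open>also where \<open>q(s) = 0\<close>: there \<open>q'(s) = 0\<close> as well, \<open>q \<ge> 0\<close> being minimal\<close>
  have score_form: "a * deriv q s * p (z - s) + b * q s * deriv p (z - s) = ?h z s * ?w z s" for s z
    using deriv_eq_0_at_zero_of_nonneg[OF q.differentiable q.nonneg] pos[of "z - s"]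
    unfolding u_def v_def by (cases "q s = 0") (simp_all add: field_simps)
  obtain Bp where Bp: "\<And>x. \<bar>p x\<bar> \<le> Bp" using p.bounded by blast
  have inner: "(\<integral>\<^sup>+z. ennreal ((?h z s)\<^sup>2 * ?w z s) \<partial>lborel)
      = ennreal (a\<^sup>2) * ennreal ((deriv q s)\<^sup>2 / q s) + ennreal (b\<^sup>2) * fisher_shift1 p * ennreal (q s)"
    for s
  proof -
    have "(\<integral>\<^sup>+z. ennreal ((?h z s)\<^sup>2 * ?w z s) \<partial>lborel)
        = (\<integral>\<^sup>+z. ennreal (q s) * ennreal ((a * u s + b * v (z - s))\<^sup>2 * p (z - s)) \<partial>lborel)"
      using q.nonneg pos
      by (intro nn_integral_cong) (simp add: ennreal_mult[symmetric] less_imp_le mult_ac)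
    also have "\<dots> = ennreal (q s) * (\<integral>\<^sup>+z. ennreal ((a * u s + b * v (z - s))\<^sup>2 * p (z - s)) \<partial>lborel)"
      unfolding v_def by (rule nn_integral_cmult) measurable
    also have "(\<integral>\<^sup>+z. ennreal ((a * u s + b * v (z - s))\<^sup>2 * p (z - s)) \<partial>lborel)
        = ennreal ((a * u s)\<^sup>2) + ennreal (b\<^sup>2) * fisher_shift1 p"
      unfolding v_def by (rule nn_integral_translate_score_square[OF p pos prob])
    also have "ennreal (q s) * (ennreal ((a * u s)\<^sup>2) + ennreal (b\<^sup>2) * fisher_shift1 p)
        = ennreal (a\<^sup>2) * ennreal ((deriv q s)\<^sup>2 / q s) + ennreal (b\<^sup>2) * fisher_shift1 p * ennreal (q s)"
    proof -
      have "q s * (a * u s)\<^sup>2 = a\<^sup>2 * ((deriv q s)\<^sup>2 / q s)"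
        unfolding u_def by (cases "q s = 0") (simp_all add: power2_eq_square field_simps)
      then have "ennreal (q s) * ennreal ((a * u s)\<^sup>2) = ennreal (a\<^sup>2) * ennreal ((deriv q s)\<^sup>2 / q s)"
        using q.nonneg[of s] by (metis ennreal_mult' zero_le_power2)
      then show ?thesis by (simp add: distrib_left mult_ac)
    qed
    finally show ?thesis .
  qed
  have "(\<integral>\<^sup>+z. ennreal ((\<integral>s. a * deriv q s * p (z - s) + b * q s * deriv p (z - s) \<partial>lborel)\<^sup>2
                  / (\<integral>s. ?w z s \<partial>lborel)) \<partial>lborel)
      \<le> (\<integral>\<^sup>+z. (\<integral>\<^sup>+s. ennreal ((?h z s)\<^sup>2 * ?w z s) \<partial>lborel) \<partial>lborel)"
    unfolding score_form
  proof (intro nn_integral_mono Cauchy_Schwarz_weighted_mean)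
    show "integrable lborel (?w z)" for z
      using Bp by (intro integrable_mult_bounded[OF q.integrable]) auto
    show "?h z \<in> borel_measurable borel" for z
      unfolding u_def v_def by measurable
  qed (rule w_nonneg)
  also have "\<dots> = (\<integral>\<^sup>+s. (\<integral>\<^sup>+z. ennreal ((?h z s)\<^sup>2 * ?w z s) \<partial>lborel) \<partial>lborel)"
    unfolding u_def v_def by (rule lborel_pair.Fubini') measurable
  also have "\<dots> = ennreal (a\<^sup>2) * fisher_shift1 q
      + ennreal (b\<^sup>2) * fisher_shift1 p * (\<integral>\<^sup>+s. ennreal (q s) \<partial>lborel)"
    unfolding inner fisher_shift1_eq[OF q.differentiable]
    by (simp add: nn_integral_add nn_integral_cmult)
  finally show ?thesis .
qed

subsection \<open>Integrating over the remaining coordinates\<close>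

lemma
  fixes p :: "real \<times> 'b \<Rightarrow> real"
  assumes M: "sigma_finite_measure M" and [measurable]: "p \<in> borel_measurable (lborel \<Otimes>\<^sub>M M)"
    and diff: "\<And>x y. (\<lambda>s. p (s, y)) differentiable (at x)"
  shows fisher_shift_eq_nn_integral_sections:
      "fisher_shift M p = (\<integral>\<^sup>+y. fisher_shift1 (\<lambda>s. p (s, y)) \<partial>M)"
    and borel_measurable_fisher_shift1_sections:
      "(\<lambda>y. fisher_shift1 (\<lambda>s. p (s, y))) \<in> borel_measurable M"
proof -
  interpret pair_sigma_finite lborel M
    by (intro pair_sigma_finite.intro lborel.sigma_finite_measure_axioms M)
  note [measurable] = borel_measurable_deriv_fst[OF _ diff]
  let ?F = "\<lambda>z. ennreal ((deriv (\<lambda>s. p (s, snd z)) (fst z))\<^sup>2 / p (fst z, snd z))"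
  have "(\<lambda>y. \<integral>\<^sup>+x. ?F (x, y) \<partial>lborel) \<in> borel_measurable M" by measurable
  then show "(\<lambda>y. fisher_shift1 (\<lambda>s. p (s, y))) \<in> borel_measurable M"
    by (simp add: fisher_shift1_eq[OF diff])
  have "fisher_shift M p = (\<integral>\<^sup>+z. ?F z \<partial>(lborel \<Otimes>\<^sub>M M))"
    unfolding fisher_shift_def by (intro nn_integral_cong) (simp add: deriv_reflect_shift[OF diff])
  also have "\<dots> = (\<integral>\<^sup>+y. (\<integral>\<^sup>+x. ?F (x, y) \<partial>lborel) \<partial>M)"
    by (rule nn_integral_snd[symmetric]) measurable
  finally show "fisher_shift M p = (\<integral>\<^sup>+y. fisher_shift1 (\<lambda>s. p (s, y)) \<partial>M)"
    by (simp add: fisher_shift1_eq[OF diff])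
qed

lemma fisher_shift_conv_first_le:
  fixes p1 :: "real \<times> 'b \<Rightarrow> real" and p2 :: "real \<Rightarrow> real"
  assumes M: "sigma_finite_measure M"
    and p1_meas[measurable]: "p1 \<in> borel_measurable (lborel \<Otimes>\<^sub>M M)"
    and p1_nonneg: "\<And>z. p1 z \<ge> 0"
    and p1_prob: "(\<integral>\<^sup>+z. ennreal (p1 z) \<partial>(lborel \<Otimes>\<^sub>M M)) = 1"
    and p1_diff: "\<And>x y. (\<lambda>s. p1 (s, y)) differentiable (at x)"
    and J1_fin: "fisher_shift M p1 < \<infinity>"
    and p2: "finite_fisher_density p2" and p2_pos: "\<And>x. p2 x > 0"
    and p2_prob: "(\<integral>t. p2 t \<partial>lborel) = 1"
    and "a + b = 1"
  shows "fisher_shift M (conv_first p1 p2)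
           \<le> ennreal (a\<^sup>2) * fisher_shift M p1 + ennreal (b\<^sup>2) * fisher_shift1 p2"
proof -
  interpret pair_sigma_finite lborel M
    by (intro pair_sigma_finite.intro lborel.sigma_finite_measure_axioms M)
  interpret p2: finite_fisher_density p2 by (rule p2)
  define mass where "mass y = (\<integral>\<^sup>+s. ennreal (p1 (s, y)) \<partial>lborel)" for y
  define J where "J y = fisher_shift1 (\<lambda>s. p1 (s, y))" for y
  define good where "good y \<longleftrightarrow> mass y < \<infinity> \<and> J y < \<infinity>" for y
  define R where "R z = (\<integral>s. a * deriv (\<lambda>s. p1 (s, snd z)) s * p2 (fst z - s)
                             + b * p1 (s, snd z) * deriv p2 (fst z - s) \<partial>lborel)" for z
  define H where "H z = (if good (snd z) then ennreal ((R z)\<^sup>2 / conv_first p1 p2 z) else \<infinity>)" for z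
  have [measurable]: "(\<lambda>(y, s). p1 (s, y)) \<in> borel_measurable (M \<Otimes>\<^sub>M lborel)"
    using measurable_pair_swap[OF p1_meas] by (simp add: split_beta')
  have [measurable]: "(\<lambda>(y, s). deriv (\<lambda>s. p1 (s, y)) s) \<in> borel_measurable (M \<Otimes>\<^sub>M lborel)"
    using measurable_pair_swap[OF borel_measurable_deriv_fst[OF p1_meas p1_diff]]
    by (simp add: split_beta')
  have [measurable]: "J \<in> borel_measurable M"
    unfolding J_def by (rule borel_measurable_fisher_shift1_sections[OF M p1_meas p1_diff])
  have [measurable]: "mass \<in> borel_measurable M"
    unfolding mass_def by measurable
  have [measurable]: "H \<in> borel_measurable (lborel \<Otimes>\<^sub>M M)"
    unfolding H_def good_def R_def conv_first_def by measurable
  have J_integral: "fisher_shift M p1 = (\<integral>\<^sup>+y. J y \<partial>M)"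
    unfolding J_def by (rule fisher_shift_eq_nn_integral_sections[OF M p1_meas p1_diff])
  have mass_integral: "(\<integral>\<^sup>+y. mass y \<partial>M) = 1"
    using nn_integral_snd[of "\<lambda>z. ennreal (p1 z)"] p1_prob by (simp add: mass_def split_beta')
  have "AE y in M. mass y \<noteq> \<infinity>"
    by (rule nn_integral_noteq_infinite) (use mass_integral in auto)
  moreover have "AE y in M. J y \<noteq> \<infinity>"
    by (rule nn_integral_noteq_infinite) (use J_integral J1_fin in auto)
  ultimately have "AE y in M. good y"
    unfolding good_def by (auto simp: less_top)
  have section_density: "finite_fisher_density (\<lambda>s. p1 (s, y))" if "good y" for y
    using that p1_diff p1_nonneg by unfold_locales (auto simp: good_def mass_def J_def)
  have deriv_conv: "deriv (\<lambda>\<tau>. conv_first p1 p2 (x - \<tau>, y)) 0 = - R (x, y)" if "good y" for x y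
  proof -
    have "((\<lambda>x. conv_first p1 p2 (x, y)) has_real_derivative R (x, y)) (at x)"
      unfolding conv_first_def R_def
      using convolution_has_real_derivative_mix[OF section_density[OF that] p2 \<open>a + b = 1\<close>] by simp
    moreover from this have "(\<lambda>x. conv_first p1 p2 (x, y)) differentiable (at x)"
      by (auto simp: real_differentiable_def)
    ultimately show ?thesis
      using deriv_reflect_shift[of "\<lambda>x. conv_first p1 p2 (x, y)"] by (simp add: DERIV_imp_deriv)
  qed
  have "fisher_shift M (conv_first p1 p2) \<le> (\<integral>\<^sup>+z. H z \<partial>(lborel \<Otimes>\<^sub>M M))"
    unfolding fisher_shift_def
    by (intro nn_integral_mono) (auto simp: H_def deriv_conv split: prod.split)
  also have "\<dots> = (\<integral>\<^sup>+y. (\<integral>\<^sup>+x. H (x, y) \<partial>lborel) \<partial>M)"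
    by (rule nn_integral_snd[symmetric]) measurable
  also have "\<dots> \<le> (\<integral>\<^sup>+y. ennreal (a\<^sup>2) * J y + ennreal (b\<^sup>2) * fisher_shift1 p2 * mass y \<partial>M)"
  proof (rule nn_integral_mono_AE)
    from \<open>AE y in M. good y\<close>
    show "AE y in M. (\<integral>\<^sup>+x. H (x, y) \<partial>lborel)
        \<le> ennreal (a\<^sup>2) * J y + ennreal (b\<^sup>2) * fisher_shift1 p2 * mass y"
    proof eventually_elim
      case (elim y)
      then show ?case
        using nn_integral_convolution_score_le[OF section_density[OF elim] p2 p2_pos p2_prob, of a b]
        by (simp add: H_def R_def conv_first_def J_def mass_def)
    qed
  qed
  also have "\<dots> = ennreal (a\<^sup>2) * (\<integral>\<^sup>+y. J y \<partial>M) + ennreal (b\<^sup>2) * fisher_shift1 p2 * (\<integral>\<^sup>+y. mass y \<partial>M)"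
    by (subst nn_integral_add) (auto simp: nn_integral_cmult)
  also have "\<dots> = ennreal (a\<^sup>2) * fisher_shift M p1 + ennreal (b\<^sup>2) * fisher_shift1 p2"
    by (simp add: J_integral mass_integral)
  finally show ?thesis .
qed

lemma sigma_finite_measure_Rk: "sigma_finite_measure (Rk k)"
  unfolding Rk_def
  by (rule product_sigma_finite.sigma_finite)
    (auto simp: product_sigma_finite_def lborel.sigma_finite_measure_axioms)

lemma optimal_weights_square_sum:
  fixes j1 j2 :: real
  assumes "j1 > 0" "j2 > 0"
  shows "(j2 / (j1 + j2))\<^sup>2 * j1 + (j1 / (j1 + j2))\<^sup>2 * j2 = 1 / (1 / j1 + 1 / j2)"
proof -
  have "j1 + j2 > 0" using assms by simp
  then have "(j2 / (j1 + j2))\<^sup>2 * j1 + (j1 / (j1 + j2))\<^sup>2 * j2 = j1 * j2 * (j1 + j2) / (j1 + j2)\<^sup>2"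
    by (simp add: power_divide add_divide_distrib power2_eq_square algebra_simps)
  also have "\<dots> = j1 * j2 / (j1 + j2)"
    using \<open>j1 + j2 > 0\<close> by (simp add: power2_eq_square)
  also have "\<dots> = 1 / (1 / j1 + 1 / j2)"
    using assms by (simp add: field_simps)
  finally show ?thesis .
qed

lemma ennreal_one_divide_add_le:
  fixes x :: ennreal and j1 j2 :: real
  assumes "x \<le> ennreal (1 / (1 / j1 + 1 / j2))" "j1 > 0" "j2 > 0"
  shows "1 / ennreal j1 + 1 / ennreal j2 \<le> 1 / x"
proof -
  let ?c = "1 / (1 / j1 + 1 / j2)"
  have "?c > 0" using assms by (simp add: add_pos_pos)
  have "1 / ennreal j1 + 1 / ennreal j2 = ennreal (1 / ?c)"
    using assms divide_ennreal[of 1 j1] divide_ennreal[of 1 j2] by (simp flip: ennreal_plus)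
  also have "ennreal (1 / ?c) \<le> 1 / x"
  proof (cases "x = 0")
    case False
    then obtain y where "x = ennreal y" "y > 0"
      using assms(1) by (cases x) (auto simp: top_unique)
    moreover have "y \<le> ?c" using assms(1) \<open>?c > 0\<close> \<open>x = ennreal y\<close> by (simp add: ennreal_le_iff2)
    then have "1 / ?c \<le> 1 / y" using \<open>y > 0\<close> by (intro frac_le) simp_all
    ultimately show ?thesis
      using divide_ennreal[of 1 y] by (simp add: ennreal_leI)
  qed simp
  finally show ?thesis .
qed

theorem lemma4:
  fixes k :: nat
    and p1 :: "real \<times> (nat \<Rightarrow> real) \<Rightarrow> real"
    and p2 :: "real \<Rightarrow> real"
  assumes p1_meas: "p1 \<in> borel_measurable (lborel \<Otimes>\<^sub>M Rk k)"
    and p1_nonneg: "\<And>z. p1 z \<ge> 0"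
    and p1_prob: "(\<integral>\<^sup>+ z. ennreal (p1 z) \<partial>(lborel \<Otimes>\<^sub>M Rk k)) = 1"
    and p1_diff: "\<And>x1 x3. (\<lambda>s. p1 (s, x3)) differentiable (at x1)"
    and J1_fin: "fisher_shift (Rk k) p1 < \<infinity>"
    and J1_pos: "fisher_shift (Rk k) p1 > 0"
    and p2_meas: "p2 \<in> borel_measurable lborel"
    and p2_pos: "\<And>x. p2 x > 0"
    and p2_prob: "(\<integral>\<^sup>+ x. ennreal (p2 x) \<partial>lborel) = 1"
    and p2_diff: "\<And>x. p2 differentiable (at x)"
    and J2_fin: "fisher_shift1 p2 < \<infinity>"
    and J2_pos: "fisher_shift1 p2 > 0"
  shows "1 / fisher_shift (Rk k) (conv_first p1 p2)
           \<ge> 1 / fisher_shift (Rk k) p1 + 1 / fisher_shift1 p2"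
proof -
  have p2: "finite_fisher_density p2"
    using p2_diff p2_pos p2_prob J2_fin by unfold_locales (auto simp: less_imp_le)
  have "ennreal (\<integral>t. p2 t \<partial>lborel) = 1"
    using p2_prob p2_pos finite_fisher_density.integrable[OF p2]
    by (subst nn_integral_eq_integral[symmetric]) (auto simp: less_imp_le)
  then have p2_integral: "(\<integral>t. p2 t \<partial>lborel) = 1" by simp
  obtain j1 j2 where j: "fisher_shift (Rk k) p1 = ennreal j1" "fisher_shift1 p2 = ennreal j2"
    and "j1 > 0" "j2 > 0"
    using J1_fin J1_pos J2_fin J2_pos
    by (cases "fisher_shift (Rk k) p1"; cases "fisher_shift1 p2") auto
  have "fisher_shift (Rk k) (conv_first p1 p2)
      \<le> ennreal ((j2 / (j1 + j2))\<^sup>2) * fisher_shift (Rk k) p1 + ennreal ((j1 / (j1 + j2))\<^sup>2) * fisher_shift1 p2"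
    using \<open>j1 > 0\<close> \<open>j2 > 0\<close>
    by (intro fisher_shift_conv_first_le[OF sigma_finite_measure_Rk p1_meas p1_nonneg p1_prob p1_diff
          J1_fin p2 p2_pos p2_integral]) (simp add: add_divide_distrib[symmetric])
  also have "\<dots> = ennreal (1 / (1 / j1 + 1 / j2))"
    using \<open>j1 > 0\<close> \<open>j2 > 0\<close>
    by (simp add: j optimal_weights_square_sum flip: ennreal_mult ennreal_plus)
  finally show ?thesis
    unfolding j using ennreal_one_divide_add_le \<open>j1 > 0\<close> \<open>j2 > 0\<close> by blast
qed

end
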